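(* Let $0<q<1$, $\tau\in\mathbb{R}$ and $\phi\in[0,2\pi)$. Let $\{e_n\}_{n\in\mathbb{Z}_+}$ be the standard orthonormal basis of $\ell^2(\mathbb{Z}_+)$ and let $D$ be the bounded self-adjoint operator on $\ell^2(\mathbb{Z}_+)$ with $De_n=q^{2n}e_n$. For $\lambda\in\{-q^{2k}\mid k\in\mathbb{Z}_+\}\cup\{q^{2\tau+2k}\mid k\in\mathbb{Z}_+\}$ let $$v_\lambda^\phi=\sum_{n=0}^\infty i^n e^{in\phi}p_n(\lambda)e_n,\qquad p_n(\lambda)=\frac{q^{-n\tau}q^{\frac12 n(n-1)}}{\sqrt{(q^2;q^2)_n}}\;{}_2\varphi_1\!\left(q^{-2n},\,q^{2\tau}/\lambda;\,0;\,q^2,\,-q^2\lambda\right).$$ Then for all $k,l\in\mathbb{Z}_+$ with $k\geq l$, $$\langle Dv^\phi_{-q^{2k}},v^\phi_{-q^{2l}}\rangle=(-q^{2\tau+2};q^2)_\infty\,(q^2;q^2)_k\,(-q^{2-2\tau};q^2)_l,$$ $$\langle Dv^\phi_{q^{2\tau+2k}},v^\phi_{q^{2\tau+2l}}\rangle=(-q^{2-2\tau};q^2)_\infty\,(q^2;q^2)_k\,(-q^{2+2\tau};q^2)_l,$$ and for all $k,l\in\mathbb{Z}_+$, $$\langle Dv^\phi_{-q^{2k}},v^\phi_{q^{2\tau+2l}}\rangle=(q^2;q^2)_\infty\,(-q^{2-2\tau};q^2)_k\,(-q^{2+2\tau};q^2)_l.$$ (The remaining matrix coefficients follow from self-adjointness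 of $D$.)
   Context: For $k\in\mathbb{Z}_+\cup\{\infty\}$ the $q$-shifted factorial is $(a;q)_k=\prod_{i=0}^{k-1}(1-aq^i)$, and $(a_1,\dots,a_r;q)_k=\prod_{i}(a_i;q)_k$. The basic hypergeometric series is ${}_2\varphi_1(a,b;c;p,z)=\sum_{j\ge0}\frac{(a;p)_j(b;p)_j}{(p;p)_j(c;p)_j}z^j$ (here terminating since $a=q^{-2n}$, $p=q^2$). The vectors $v_\lambda^\phi$ lie in $\ell^2(\mathbb{Z}_+)$ (they are the eigenvectors forming an orthogonal basis). $\langle\cdot,\cdot\rangle$ is the inner product of $\ell^2(\mathbb{Z}_+)$. *)

theory Defs
  imports "HOL-Analysis.Analysis"
begin

definition qpoch :: "real \<Rightarrow> real \<Rightarrow> nat \<Rightarrow> real" where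
  "qpoch a q k = (\<Prod>i<k. 1 - a * q ^ i)"

definition qpoch_inf :: "real \<Rightarrow> real \<Rightarrow> real" where
  "qpoch_inf a q = (\<Prod>i. 1 - a * q ^ i)"

definition phi21 :: "real \<Rightarrow> real \<Rightarrow> real \<Rightarrow> real \<Rightarrow> real \<Rightarrow> real" where
  "phi21 a b c p z =
     (\<Sum>j. qpoch a p j * qpoch b p j / (qpoch p p j * qpoch c p j) * z ^ j)"

definition pn :: "real \<Rightarrow> real \<Rightarrow> real \<Rightarrow> nat \<Rightarrow> real" where
  "pn q \<tau> lam n =
     q powr (- (real n * \<tau>)) * q powr (real n * (real n - 1) / 2)
     / sqrt (qpoch (q^2) (q^2) n)
     * phi21 (q powr (- (2 * real n))) (q powr (2 * \<tau>) / lam) 0 (q^2) (- (q^2) * lam)"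

definition vvec :: "real \<Rightarrow> real \<Rightarrow> real \<Rightarrow> real \<Rightarrow> nat \<Rightarrow> complex" where
  "vvec q \<tau> \<phi> lam n = \<i> ^ n * exp (\<i> * of_real (real n * \<phi>)) * of_real (pn q \<tau> lam n)"

definition D_inner :: "real \<Rightarrow> (nat \<Rightarrow> complex) \<Rightarrow> (nat \<Rightarrow> complex) \<Rightarrow> complex" where
  "D_inner q v w = (\<Sum>n. of_real (q ^ (2 * n)) * v n * cnj (w n))"

end

theory Submission
  imports Defs
begin

text \<open>
Put Q = q^2 and r = q^(-2 tau). Up to unimodular phases, the n-th coefficient of v_lambda is
sqrt(w_n / Q^n) u_n(r lambda), with weight w_n = Q^(n(n-1)/2) (Q r)^n / (Q;Q)_n and polynomials
u_n(x) = 2phi1(Q^-n, 1/x; 0; Q, -Qx/r). Hence <D v_lambda, v_mu> = S(r lambda, r mu) for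
S(x, y) = sum_n w_n u_n(x) u_n(y), and the spectral points become x = Q^k and x = -r Q^k,
where 1 and -r are the roots of (x - 1)(x + r).

Two q-difference equations, u_(n+1)(x) - u_(n+1)(Qx) = (1 - Q^(n+1)) / (r Q^n) x u_n(x) and
x r u_(n+1)(x) = (x - 1)(x + r) u_n(x/Q) + r u_n(x), turn into the recurrence
S(Qx, Qy) = (1 - x/y) S(x, Qy) + x (1 - Qy)(Qy + r) / (r y) S(x, y), and at a root b into
S(Qx, b) = (1 - Qx/b) S(x, b). Induction on k and l reduces the matrix coefficients to
S(1, 1), S(-r, -r) and S(-r, 1), which Euler's identity
sum_n Q^(n(n-1)/2) z^n / (Q;Q)_n = (-z;Q)_inf evaluates as infinite products.
\<close>

lemma qpoch_0 [simp]: "qpoch a p 0 = 1"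
  by (simp add: qpoch_def)

lemma qpoch_Suc: "qpoch a p (Suc n) = qpoch a p n * (1 - a * p ^ n)"
  by (simp add: qpoch_def)

lemma qpoch_Suc_left: "qpoch a p (Suc n) = (1 - a) * qpoch (a * p) p n"
  unfolding qpoch_def by (subst prod.lessThan_Suc_shift) (simp add: mult.assoc)

lemma qpoch_zero_left [simp]: "qpoch 0 p n = 1"
  by (simp add: qpoch_def)

lemma qpoch_self_pos:
  assumes "0 < p" "p < 1"
  shows "0 < qpoch p p n"
  unfolding qpoch_def
proof (rule prod_pos)
  fix i
  have "p ^ Suc i < 1" using assms by (rule power_Suc_less_one)
  then show "0 < 1 - p * p ^ i" by simp
qed

lemma qpoch_inverse_power_eq_0:
  assumes "p \<noteq> 0" "n < j"
  shows "qpoch (inverse (p ^ n)) p j = 0"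
  unfolding qpoch_def using assms by (intro prod_zero) (auto intro!: bexI[of _ n])

lemma sum_lessThan_Suc_shift_case:
  fixes f g :: "nat \<Rightarrow> 'a::semiring_0"
  shows "(\<Sum>s<Suc N. (case s of 0 \<Rightarrow> 0 | Suc j \<Rightarrow> f j) * g s) = (\<Sum>j<N. f j * g (Suc j))"
  by (subst sum.lessThan_Suc_shift) simp

lemma prod_power_square_eq_powr:
  assumes "0 < q"
  shows "(\<Prod>i<n. (q\<^sup>2) ^ i) = q powr (real n * (real n - 1))"
proof (induction n)
  case (Suc n)
  have "(q\<^sup>2) ^ n = q powr (2 * real n)"
    using powr_realpow[OF assms, of "2 * n"] by (simp add: power_mult)
  then show ?case
    using Suc.IH by (simp add: powr_add[symmetric] algebra_simps)
qed (use assms in simp)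

lemma vvec_mult_cnj: "vvec q \<tau> \<phi> a n * cnj (vvec q \<tau> \<phi> b n) = of_real (pn q \<tau> a n * pn q \<tau> b n)"
proof -
  define z where "z = \<i> ^ n * exp (\<i> * of_real (real n * \<phi>))"
  have "z * cnj z = 1"
    using complex_norm_square[of z] by (simp add: z_def norm_mult norm_power)
  then show ?thesis
    unfolding vvec_def z_def[symmetric] by (simp add: mult_ac)
qed

locale q_base =
  fixes Q :: real
  assumes Q_pos: "0 < Q" and Q_less_1: "Q < 1"
begin

lemma power_Q_pos: "0 < Q ^ n"
  using Q_pos by simp

lemma one_minus_power_Q_pos: "0 < n \<Longrightarrow> 0 < 1 - Q ^ n"
  using Q_pos Q_less_1 by (simp add: power_less_one_iff)

lemma qpoch_Q_Q_pos: "0 < qpoch Q Q n"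
  using qpoch_self_pos[OF Q_pos Q_less_1] .

definition euler_coeff :: "nat \<Rightarrow> real" where
  "euler_coeff n = (\<Prod>i<n. Q ^ i) / qpoch Q Q n"

lemma euler_coeff_0 [simp]: "euler_coeff 0 = 1"
  by (simp add: euler_coeff_def)

lemma euler_coeff_Suc: "euler_coeff (Suc n) * (1 - Q ^ Suc n) = euler_coeff n * Q ^ n"
  using one_minus_power_Q_pos[of "Suc n"] by (simp add: euler_coeff_def qpoch_Suc)

lemma euler_coeff_pos: "0 < euler_coeff n"
  unfolding euler_coeff_def using qpoch_Q_Q_pos Q_pos by (simp add: prod_pos)

lemma summable_euler_coeff: "summable (\<lambda>n. euler_coeff n * z ^ n)"
proof -
  have "(\<lambda>n. Q ^ n * \<bar>z\<bar>) \<longlonglongrightarrow> 0"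
    using Q_pos Q_less_1 by (intro tendsto_mult_left_zero LIMSEQ_power_zero) simp
  moreover have "0 < (1 - Q) / 2" using Q_less_1 by simp
  ultimately have "eventually (\<lambda>n. Q ^ n * \<bar>z\<bar> < (1 - Q) / 2) sequentially"
    by (rule order_tendstoD(2))
  then obtain N where N: "\<And>n. N \<le> n \<Longrightarrow> Q ^ n * \<bar>z\<bar> < (1 - Q) / 2"
    unfolding eventually_sequentially by blast
  show ?thesis
  proof (rule summable_ratio_test[of "1/2" N])
    fix n assume "N \<le> n"
    have "1 - Q \<le> 1 - Q ^ Suc n"
      using Q_pos Q_less_1 by (simp add: power_le_one mult_left_le)
    then have bound: "Q ^ n * \<bar>z\<bar> \<le> 1/2 * (1 - Q ^ Suc n)"
      using N[OF \<open>N \<le> n\<close>] by (simp add: field_simps)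
    have "\<bar>euler_coeff n * Q ^ n * z ^ Suc n\<bar> = Q ^ n * \<bar>z\<bar> * \<bar>euler_coeff n * z ^ n\<bar>"
      using Q_pos by (simp add: abs_mult power_abs mult_ac)
    also have "\<dots> \<le> 1/2 * (1 - Q ^ Suc n) * \<bar>euler_coeff n * z ^ n\<bar>"
      by (rule mult_right_mono[OF bound]) simp
    also have "euler_coeff n * Q ^ n * z ^ Suc n = (1 - Q ^ Suc n) * (euler_coeff (Suc n) * z ^ Suc n)"
      by (simp add: euler_coeff_Suc[symmetric])
    finally show "norm (euler_coeff (Suc n) * z ^ Suc n) \<le> 1/2 * norm (euler_coeff n * z ^ n)"
      using one_minus_power_Q_pos[of "Suc n"] by (simp add: abs_mult mult.assoc)
  qed simp
qed

definition euler_series :: "real \<Rightarrow> real" where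
  "euler_series z = (\<Sum>n. euler_coeff n * z ^ n)"

lemma euler_series_functional_eq: "euler_series z = (1 + z) * euler_series (Q * z)"
proof -
  have s1: "summable (\<lambda>n. euler_coeff n * z ^ n)"
    and s2: "summable (\<lambda>n. euler_coeff n * (Q * z) ^ n)"
    by (rule summable_euler_coeff)+
  have "euler_series z - euler_series (Q * z) = (\<Sum>n. euler_coeff n * z ^ n - euler_coeff n * (Q * z) ^ n)"
    unfolding euler_series_def by (rule suminf_diff[OF s1 s2])
  also have "\<dots> = (\<Sum>n. euler_coeff (Suc n) * z ^ Suc n - euler_coeff (Suc n) * (Q * z) ^ Suc n)"
    using suminf_split_head[OF summable_diff[OF s1 s2]] by simp
  also have "\<dots> = (\<Sum>n. z * (euler_coeff n * (Q * z) ^ n))"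
  proof (rule suminf_cong)
    fix n
    have "euler_coeff (Suc n) * z ^ Suc n - euler_coeff (Suc n) * (Q * z) ^ Suc n
        = (euler_coeff (Suc n) * (1 - Q ^ Suc n)) * z ^ Suc n"
      by (simp add: power_mult_distrib algebra_simps)
    also have "\<dots> = z * (euler_coeff n * (Q * z) ^ n)"
      by (simp only: euler_coeff_Suc) (simp add: power_mult_distrib mult_ac)
    finally show "euler_coeff (Suc n) * z ^ Suc n - euler_coeff (Suc n) * (Q * z) ^ Suc n
        = z * (euler_coeff n * (Q * z) ^ n)" .
  qed
  also have "\<dots> = z * euler_series (Q * z)"
    unfolding euler_series_def by (rule suminf_mult[OF s2])
  finally show ?thesis by (simp add: algebra_simps)
qed

lemma euler_series_iterate: "euler_series z = (\<Prod>i<N. 1 + z * Q ^ i) * euler_series (Q ^ N * z)"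
proof (induction N arbitrary: z)
  case (Suc N)
  have "euler_series z = (1 + z) * ((\<Prod>i<N. 1 + Q * z * Q ^ i) * euler_series (Q ^ N * (Q * z)))"
    by (subst Suc.IH[symmetric]) (rule euler_series_functional_eq)
  then show ?case
    by (subst prod.lessThan_Suc_shift) (simp add: mult_ac)
qed simp

text \<open>The partial products are quotients of the series at z and at Q^N z, and the latter
  tends to the constant term 1.\<close>
lemma qpoch_inf_eq_euler_series: "qpoch_inf (- z) Q = euler_series z"
proof -
  have "isCont euler_series 0"
    unfolding euler_series_def
    by (rule isCont_powser_converges_everywhere) (rule summable_euler_coeff)
  moreover have "(\<lambda>N. Q ^ N * z) \<longlonglongrightarrow> 0"
    using Q_pos Q_less_1 by (intro tendsto_mult_left_zero LIMSEQ_power_zero) simp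
  moreover have "euler_series 0 = 1"
    unfolding euler_series_def using powser_zero[of euler_coeff] by simp
  ultimately have tail: "(\<lambda>N. euler_series (Q ^ N * z)) \<longlonglongrightarrow> 1"
    using isCont_tendsto_compose by fastforce
  have "(\<lambda>N. euler_series z / euler_series (Q ^ N * z)) \<longlonglongrightarrow> euler_series z"
    using tendsto_divide[OF tendsto_const tail] by simp
  moreover have "eventually (\<lambda>N. euler_series (Q ^ N * z) \<noteq> 0) sequentially"
    using tail by (rule tendsto_imp_eventually_ne) simp
  then have "eventually
      (\<lambda>N. euler_series z / euler_series (Q ^ N * z) = (\<Prod>i<N. 1 + z * Q ^ i)) sequentially"
  proof (rule eventually_mono)
    fix N assume "euler_series (Q ^ N * z) \<noteq> 0"
    then show "euler_series z / euler_series (Q ^ N * z) = (\<Prod>i<N. 1 + z * Q ^ i)"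
      using euler_series_iterate[of z N] by (simp add: field_simps)
  qed
  ultimately have partial: "(\<lambda>N. \<Prod>i<N. 1 + z * Q ^ i) \<longlonglongrightarrow> euler_series z"
    by (rule Lim_transform_eventually)
  have "summable (\<lambda>i. norm (1 + z * Q ^ i - 1))"
    using Q_pos Q_less_1 by (simp add: abs_mult summable_geometric)
  then have "convergent_prod (\<lambda>i. 1 + z * Q ^ i)"
    by (intro abs_convergent_prod_imp_convergent_prod summable_imp_abs_convergent_prod)
  then have "(\<lambda>N. \<Prod>i<N. 1 + z * Q ^ i) \<longlonglongrightarrow> (\<Prod>i. 1 + z * Q ^ i)"
    using LIMSEQ_lessThan_iff_atMost convergent_prod_LIMSEQ by blast
  with partial have "(\<Prod>i. 1 + z * Q ^ i) = euler_series z"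
    by (rule LIMSEQ_unique[rotated])
  then show ?thesis by (simp add: qpoch_inf_def)
qed

definition newton_prod :: "nat \<Rightarrow> real \<Rightarrow> real" where
  "newton_prod j x = (\<Prod>i<j. x - Q ^ i)"

lemma newton_prod_0 [simp]: "newton_prod 0 x = 1"
  by (simp add: newton_prod_def)

lemma newton_prod_Suc: "newton_prod (Suc j) x = newton_prod j x * (x - Q ^ j)"
  by (simp add: newton_prod_def)

lemma newton_prod_Suc_at_1 [simp]: "newton_prod (Suc j) 1 = 0"
  unfolding newton_prod_def by (intro prod_zero) (auto intro!: bexI[of _ 0])

lemma newton_prod_Suc_scale: "newton_prod (Suc j) (Q * x) = (Q * x - 1) * Q ^ j * newton_prod j x"
proof -
  have "newton_prod (Suc j) (Q * x) = (Q * x - 1) * (\<Prod>i<j. Q * (x - Q ^ i))"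
    unfolding newton_prod_def by (subst prod.lessThan_Suc_shift) (simp add: algebra_simps)
  then show ?thesis by (simp add: newton_prod_def prod.distrib)
qed

lemma newton_prod_Suc_diff:
  "newton_prod (Suc j) x - newton_prod (Suc j) (Q * x) = (1 - Q ^ Suc j) * x * newton_prod j x"
  unfolding newton_prod_Suc_scale by (simp add: newton_prod_Suc algebra_simps)

lemma newton_prod_divide_Q: "(x - 1) * newton_prod j (x / Q) = newton_prod (Suc j) x / Q ^ j"
  using newton_prod_Suc_scale[of j "x / Q"] Q_pos power_Q_pos[of j] by (simp add: field_simps)

lemma mult_x_newton_sum:
  assumes "f N = 0"
  shows "x * (\<Sum>j<N. f j * newton_prod j x)
    = (\<Sum>s<Suc N. ((case s of 0 \<Rightarrow> 0 | Suc j \<Rightarrow> f j) + Q ^ s * f s) * newton_prod s x)"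
proof -
  have "x * (\<Sum>j<N. f j * newton_prod j x)
      = (\<Sum>j<N. f j * newton_prod (Suc j) x) + (\<Sum>j<N. Q ^ j * f j * newton_prod j x)"
    unfolding sum_distrib_left sum.distrib[symmetric]
    by (rule sum.cong) (simp_all add: newton_prod_Suc algebra_simps)
  also have "(\<Sum>j<N. Q ^ j * f j * newton_prod j x) = (\<Sum>s<Suc N. Q ^ s * f s * newton_prod s x)"
    using assms by simp
  finally show ?thesis
    by (simp only: distrib_right sum.distrib sum_lessThan_Suc_shift_case)
qed

end

locale q_polys = q_base +
  fixes r :: real
  assumes r_pos: "0 < r"
begin

definition ucoeff :: "nat \<Rightarrow> nat \<Rightarrow> real" where
  "ucoeff n j = qpoch (inverse (Q ^ n)) Q j / qpoch Q Q j * (- Q / r) ^ j"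

text \<open>This is 2phi1(Q^-n, 1/x; 0; Q, -Qx/r), because (1/x;Q)_j x^j = newton_prod j x.\<close>
definition upoly :: "nat \<Rightarrow> real \<Rightarrow> real" where
  "upoly n x = (\<Sum>j\<le>n. ucoeff n j * newton_prod j x)"

lemma ucoeff_0 [simp]: "ucoeff n 0 = 1"
  by (simp add: ucoeff_def)

lemma ucoeff_eq_0: "n < j \<Longrightarrow> ucoeff n j = 0"
  using qpoch_inverse_power_eq_0[of Q n j] Q_pos by (simp add: ucoeff_def)

lemma ucoeff_Suc:
  "ucoeff m (Suc j) = ucoeff m j * ((1 - Q ^ j / Q ^ m) * (- Q / r) / (1 - Q ^ Suc j))"
  using one_minus_power_Q_pos[of "Suc j"] power_Q_pos[of m]
  by (simp add: ucoeff_def qpoch_Suc field_simps)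

lemma ucoeff_Suc_Suc:
  "ucoeff (Suc m) (Suc j) = ucoeff m j * ((1 - Q ^ Suc m) / (r * Q ^ m) / (1 - Q ^ Suc j))"
proof -
  have "inverse (Q ^ Suc m) * Q = inverse (Q ^ m)"
    using Q_pos by simp
  then have "qpoch (inverse (Q ^ Suc m)) Q (Suc j) = (1 - inverse (Q ^ Suc m)) * qpoch (inverse (Q ^ m)) Q j"
    by (simp only: qpoch_Suc_left)
  then have "ucoeff (Suc m) (Suc j) = (1 - inverse (Q ^ Suc m)) * qpoch (inverse (Q ^ m)) Q j
      / (qpoch Q Q j * (1 - Q * Q ^ j)) * (- Q / r * (- Q / r) ^ j)"
    by (simp only: ucoeff_def qpoch_Suc power_Suc[of "- Q / r"] mult_1)
  also have "\<dots> = ucoeff m j * ((1 - Q ^ Suc m) / (r * Q ^ m) / (1 - Q ^ Suc j))"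
    using one_minus_power_Q_pos[of "Suc j"] power_Q_pos[of m] qpoch_Q_Q_pos[of j] Q_pos r_pos
    by (simp add: ucoeff_def field_simps)
  finally show ?thesis .
qed

lemma upoly_eq_sum: "n < N \<Longrightarrow> upoly n x = (\<Sum>j<N. ucoeff n j * newton_prod j x)"
  unfolding upoly_def by (rule sum.mono_neutral_left) (auto simp: ucoeff_eq_0)

lemma upoly_0 [simp]: "upoly 0 x = 1"
  by (simp add: upoly_def)

lemma upoly_at_1: "upoly n 1 = 1"
  by (simp add: upoly_eq_sum[of n "Suc n"] sum.lessThan_Suc_shift del: sum.lessThan_Suc)

lemma upoly_Suc_diff:
  "upoly (Suc n) x - upoly (Suc n) (Q * x) = (1 - Q ^ Suc n) / (r * Q ^ n) * x * upoly n x"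
proof -
  have nonzero: "1 - Q ^ Suc j \<noteq> 0" for j
    using one_minus_power_Q_pos[of "Suc j"] by simp
  have "upoly (Suc n) x - upoly (Suc n) (Q * x)
      = (\<Sum>j<Suc n. ucoeff (Suc n) (Suc j) * (newton_prod (Suc j) x - newton_prod (Suc j) (Q * x)))"
    by (simp add: upoly_eq_sum[of "Suc n" "Suc (Suc n)"] sum.lessThan_Suc_shift
        sum_subtractf[symmetric] algebra_simps del: sum.lessThan_Suc)
  also have "\<dots> = (\<Sum>j<Suc n. (1 - Q ^ Suc n) / (r * Q ^ n) * x * (ucoeff n j * newton_prod j x))"
    using nonzero by (intro sum.cong) (simp_all add: newton_prod_Suc_diff ucoeff_Suc_Suc)
  also have "\<dots> = (1 - Q ^ Suc n) / (r * Q ^ n) * x * upoly n x"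
    by (simp only: upoly_eq_sum[OF lessI] sum_distrib_left)
  finally show ?thesis .
qed

definition shifted_ucoeff :: "nat \<Rightarrow> nat \<Rightarrow> real" where
  "shifted_ucoeff m s = (case s of 0 \<Rightarrow> 0 | Suc j \<Rightarrow> ucoeff m j / Q ^ j)"

lemma shifted_ucoeff_eq_0: "Suc m < s \<Longrightarrow> shifted_ucoeff m s = 0"
  by (cases s) (simp_all add: shifted_ucoeff_def ucoeff_eq_0)

lemma upoly_divide_Q:
  "m < N \<Longrightarrow> (x - 1) * upoly m (x / Q) = (\<Sum>s<Suc N. shifted_ucoeff m s * newton_prod s x)"
  using Q_pos
  by (simp add: upoly_eq_sum shifted_ucoeff_def sum_lessThan_Suc_shift_case sum_distrib_left
      mult.left_commute[of "x - 1"] newton_prod_divide_Q del: sum.lessThan_Suc)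

text \<open>The coefficients of newton_prod s on the two sides of upoly_contiguous, computed with
  x * newton_prod s x = newton_prod (Suc s) x + Q^s * newton_prod s x.\<close>
lemma ucoeff_contiguous:
  "r * ((case s of 0 \<Rightarrow> 0 | Suc j \<Rightarrow> ucoeff (Suc m) j) + Q ^ s * ucoeff (Suc m) s)
   = (case s of 0 \<Rightarrow> 0 | Suc j \<Rightarrow> shifted_ucoeff m j) + (Q ^ s + r) * shifted_ucoeff m s + r * ucoeff m s"
proof -
  have nonzero: "1 - Q ^ Suc j \<noteq> 0" "Q ^ j \<noteq> 0" for j
    using one_minus_power_Q_pos[of "Suc j"] Q_pos by simp_all
  consider "s = 0" | "s = 1" | j where "s = Suc (Suc j)"
    by (metis One_nat_def not0_implies_Suc)
  then show ?thesis
  proof cases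
    case 2
    have "1 - Q \<noteq> 0" "Q ^ m \<noteq> 0" "r \<noteq> 0"
      using Q_less_1 Q_pos r_pos by simp_all
    have lhs: "ucoeff (Suc m) 1 = (1 - Q ^ Suc m) / (r * Q ^ m * (1 - Q))"
      using ucoeff_Suc_Suc[of m 0] by (simp add: mult.assoc)
    have rhs: "ucoeff m 1 = (Q - Q ^ m * Q) / (r * Q ^ m * (1 - Q))"
      using ucoeff_Suc[of m 0] \<open>1 - Q \<noteq> 0\<close> \<open>Q ^ m \<noteq> 0\<close> \<open>r \<noteq> 0\<close> by (simp add: field_simps)
    have "r * Q * ucoeff (Suc m) 1 = Q + r * ucoeff m 1"
      unfolding lhs rhs using \<open>1 - Q \<noteq> 0\<close> \<open>Q ^ m \<noteq> 0\<close> \<open>r \<noteq> 0\<close> by (simp add: field_simps)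
    with 2 show ?thesis
      by (simp add: shifted_ucoeff_def algebra_simps)
  next
    case 3
    then show ?thesis
      using nonzero[of j] nonzero[of "Suc j"] nonzero[of m] r_pos
      by (simp add: shifted_ucoeff_def ucoeff_Suc_Suc[of m j] ucoeff_Suc_Suc[of m "Suc j"]
          ucoeff_Suc[of m j] ucoeff_Suc[of m "Suc j"] divide_simps) (simp add: algebra_simps)
  qed (simp add: shifted_ucoeff_def)
qed

lemma upoly_contiguous:
  "x * r * upoly (Suc m) x = (x - 1) * (x + r) * upoly m (x / Q) + r * upoly m x"
proof -
  let ?N = "Suc (Suc (Suc m))"
  have "ucoeff (Suc m) ?N = 0" "shifted_ucoeff m ?N = 0"
    by (simp_all add: ucoeff_eq_0 shifted_ucoeff_eq_0)
  have shifted: "(x - 1) * upoly m (x / Q) = (\<Sum>s<?N. shifted_ucoeff m s * newton_prod s x)"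
      "(x - 1) * upoly m (x / Q) = (\<Sum>s<Suc ?N. shifted_ucoeff m s * newton_prod s x)"
    by (rule upoly_divide_Q, simp)+
  have unshifted: "upoly m x = (\<Sum>s<Suc ?N. ucoeff m s * newton_prod s x)"
    by (rule upoly_eq_sum) simp
  have "x * r * upoly (Suc m) x = r * (x * (\<Sum>j<?N. ucoeff (Suc m) j * newton_prod j x))"
    by (simp only: upoly_eq_sum[of "Suc m" ?N] lessI less_SucI mult_ac)
  also have "\<dots> = (\<Sum>s<Suc ?N. r * ((case s of 0 \<Rightarrow> 0 | Suc j \<Rightarrow> ucoeff (Suc m) j)
      + Q ^ s * ucoeff (Suc m) s) * newton_prod s x)"
    unfolding mult_x_newton_sum[where f = "ucoeff (Suc m)", OF \<open>ucoeff (Suc m) ?N = 0\<close>]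
    by (simp only: sum_distrib_left mult.assoc)
  also have "\<dots> = (\<Sum>s<Suc ?N. ((case s of 0 \<Rightarrow> 0 | Suc j \<Rightarrow> shifted_ucoeff m j)
      + (Q ^ s + r) * shifted_ucoeff m s + r * ucoeff m s) * newton_prod s x)"
    by (simp only: ucoeff_contiguous)
  also have "\<dots> = x * (\<Sum>s<?N. shifted_ucoeff m s * newton_prod s x)
      + r * (\<Sum>s<Suc ?N. shifted_ucoeff m s * newton_prod s x)
      + r * (\<Sum>s<Suc ?N. ucoeff m s * newton_prod s x)"
    unfolding mult_x_newton_sum[where f = "shifted_ucoeff m", OF \<open>shifted_ucoeff m ?N = 0\<close>]
    by (simp add: sum_distrib_left sum.distrib[symmetric] algebra_simps del: sum.lessThan_Suc)
  also have "\<dots> = (x - 1) * (x + r) * upoly m (x / Q) + r * upoly m x"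
    unfolding shifted[symmetric] unshifted[symmetric] by (simp add: algebra_simps)
  finally show ?thesis .
qed

lemma upoly_at_minus_r: "upoly n (- r) = (- 1 / r) ^ n"
proof (induction n)
  case (Suc n)
  have "r * (r * upoly (Suc n) (- r) + upoly n (- r)) = 0"
    using upoly_contiguous[of "- r" n] by (simp add: algebra_simps)
  then have "r * upoly (Suc n) (- r) + upoly n (- r) = 0"
    using r_pos by simp
  then have "upoly (Suc n) (- r) = - 1 / r * upoly n (- r)"
    using r_pos by (simp add: field_simps add_eq_0_iff)
  with Suc.IH show ?case by simp
qed simp

text \<open>The weights decay like Q^(n^2/2), so exponential growth of u_n suffices for every series
  below to converge.\<close>
definition exp_bounded :: "real \<Rightarrow> bool" where
  "exp_bounded x \<longleftrightarrow> (\<exists>K. \<forall>n. \<bar>upoly n x\<bar> \<le> K ^ n)"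

lemma exp_bounded_at_root:
  assumes "(b - 1) * (b + r) = 0"
  shows "exp_bounded b"
proof -
  have "b = 1 \<or> b = - r"
    using assms by auto
  then show ?thesis
    unfolding exp_bounded_def
  proof
    assume "b = - r"
    then show "\<exists>K. \<forall>n. \<bar>upoly n b\<bar> \<le> K ^ n"
      using r_pos by (intro exI[of _ "1 / r"]) (simp add: upoly_at_minus_r power_abs)
  qed (rule exI[of _ 1], simp add: upoly_at_1)
qed

lemma abs_upoly_Suc_mult_Q_le:
  "\<bar>upoly (Suc m) (Q * x)\<bar> \<le> \<bar>upoly (Suc m) x\<bar> + \<bar>x\<bar> / (r * Q ^ m) * \<bar>upoly m x\<bar>"
proof -
  define c where "c = (1 - Q ^ Suc m) / (r * Q ^ m)"
  have c: "0 \<le> c" "c \<le> 1 / (r * Q ^ m)"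
    using one_minus_power_Q_pos[of "Suc m"] power_Q_pos[of "Suc m"] power_Q_pos[of m] r_pos
    by (auto simp: c_def intro: divide_right_mono)
  have "\<bar>c * x * upoly m x\<bar> \<le> 1 / (r * Q ^ m) * (\<bar>x\<bar> * \<bar>upoly m x\<bar>)"
    unfolding abs_mult mult.assoc abs_of_nonneg[OF c(1)] by (rule mult_right_mono[OF c(2)]) simp
  moreover have "upoly (Suc m) (Q * x) = upoly (Suc m) x - c * x * upoly m x"
    using upoly_Suc_diff[of m x] by (simp add: c_def)
  ultimately show ?thesis
    using abs_triangle_ineq4[of "upoly (Suc m) x" "c * x * upoly m x"] by simp
qed

lemma exp_bounded_mult_Q:
  assumes "exp_bounded x"
  shows "exp_bounded (Q * x)"
proof -
  obtain K where K: "\<And>n. \<bar>upoly n x\<bar> \<le> K ^ n"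
    using assms unfolding exp_bounded_def by blast
  define L where "L = max K 1 / Q"
  define c where "c = 1 + \<bar>x\<bar> / r"
  have "0 \<le> K" "1 \<le> c"
    using K[of 1] r_pos by (simp_all add: c_def)
  have "max K 1 * Q \<le> max K 1"
    using Q_pos Q_less_1 by (intro mult_right_le_one_le) auto
  then have "max K 1 \<le> L"
    using Q_pos by (simp add: L_def le_divide_eq)
  moreover have "K / Q \<le> L"
    unfolding L_def using Q_pos by (intro divide_right_mono) auto
  ultimately have L: "1 \<le> L" "K \<le> L" "K / Q \<le> L"
    by auto
  have "\<bar>upoly n (Q * x)\<bar> \<le> (c * L) ^ n" for n
  proof (cases n)
    case (Suc m)
    have "\<bar>x\<bar> / (r * Q ^ m) * \<bar>upoly m x\<bar> \<le> \<bar>x\<bar> / (r * Q ^ m) * K ^ m"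
      using K[of m] power_Q_pos[of m] r_pos by (intro mult_left_mono) auto
    also have "\<dots> = \<bar>x\<bar> / r * (K / Q) ^ m"
      by (simp add: power_divide)
    also have "\<dots> \<le> \<bar>x\<bar> / r * L ^ Suc m"
      using L \<open>0 \<le> K\<close> Q_pos r_pos power_increasing[of m "Suc m" L]
      by (intro mult_left_mono order_trans[OF power_mono[of "K / Q" L m]]) auto
    finally have "\<bar>upoly n (Q * x)\<bar> \<le> L ^ Suc m + \<bar>x\<bar> / r * L ^ Suc m"
      using abs_upoly_Suc_mult_Q_le[of m x] K[of "Suc m"] power_mono[OF L(2) \<open>0 \<le> K\<close>, of "Suc m"]
      unfolding Suc by linarith
    also have "\<dots> = c * L ^ Suc m"
      by (simp add: c_def algebra_simps)
    also have "\<dots> \<le> c ^ Suc m * L ^ Suc m"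
      using power_increasing[of 1 "Suc m" c] \<open>1 \<le> c\<close> L by (intro mult_right_mono) auto
    also have "\<dots> = (c * L) ^ Suc m"
      by (simp add: power_mult_distrib)
    finally show ?thesis
      unfolding Suc .
  qed simp
  then show ?thesis
    unfolding exp_bounded_def by blast
qed

lemma exp_bounded_mult_power_Q: "exp_bounded a \<Longrightarrow> exp_bounded (a * Q ^ k)"
  by (induction k) (simp_all add: exp_bounded_mult_Q mult.left_commute[of a])

definition weight :: "nat \<Rightarrow> real" where
  "weight n = euler_coeff n * (Q * r) ^ n"

definition pairing :: "real \<Rightarrow> real \<Rightarrow> real" where
  "pairing x y = (\<Sum>n. weight n * upoly n x * upoly n y)"

definition pairing_shift :: "real \<Rightarrow> real \<Rightarrow> real" where
  "pairing_shift x y = (\<Sum>n. weight n * upoly n x * upoly (Suc n) y)"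

lemma weight_Suc: "weight (Suc n) * ((1 - Q ^ Suc n) / (r * Q ^ n)) = Q * weight n"
proof -
  have "weight (Suc n) * ((1 - Q ^ Suc n) / (r * Q ^ n))
      = euler_coeff (Suc n) * (1 - Q ^ Suc n) * (Q * r) ^ Suc n / (r * Q ^ n)"
    by (simp add: weight_def)
  also have "\<dots> = Q * weight n"
    using Q_pos r_pos by (simp only: euler_coeff_Suc) (simp add: weight_def power_mult_distrib field_simps)
  finally show ?thesis .
qed

lemma summable_weight_mult:
  assumes "\<And>n. \<bar>f n\<bar> \<le> C * K ^ n"
  shows "summable (\<lambda>n. weight n * f n)"
proof (rule summable_comparison_test')
  show "summable (\<lambda>n. C * (euler_coeff n * (Q * r * K) ^ n))"
    by (intro summable_mult summable_euler_coeff)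
  fix n
  have "0 < weight n"
    using euler_coeff_pos[of n] Q_pos r_pos by (simp add: weight_def)
  then have "norm (weight n * f n) \<le> weight n * (C * K ^ n)"
    using assms[of n] by (simp add: abs_mult)
  then show "norm (weight n * f n) \<le> C * (euler_coeff n * (Q * r * K) ^ n)"
    by (simp add: weight_def power_mult_distrib mult_ac)
qed

lemma summable_pairing:
  assumes "exp_bounded x" "exp_bounded y"
  shows "summable (\<lambda>n. weight n * upoly n x * upoly n y)"
    and "summable (\<lambda>n. weight n * upoly n x * upoly (Suc n) y)"
proof -
  obtain K L where K: "\<And>n. \<bar>upoly n x\<bar> \<le> K ^ n" and L: "\<And>n. \<bar>upoly n y\<bar> \<le> L ^ n"
    using assms unfolding exp_bounded_def by blast
  have "\<bar>upoly n x * upoly n y\<bar> \<le> 1 * (K * L) ^ n" for n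
    unfolding abs_mult power_mult_distrib using K[of n] L[of n] by (simp add: mult_mono')
  from summable_weight_mult[OF this] show "summable (\<lambda>n. weight n * upoly n x * upoly n y)"
    by (simp add: mult.assoc)
  have "\<bar>upoly n x * upoly (Suc n) y\<bar> \<le> L * (K * L) ^ n" for n
    using mult_mono'[OF K[of n] L[of "Suc n"] abs_ge_zero abs_ge_zero]
    by (simp add: abs_mult power_mult_distrib mult_ac)
  from summable_weight_mult[OF this] show "summable (\<lambda>n. weight n * upoly n x * upoly (Suc n) y)"
    by (simp add: mult.assoc)
qed

lemma pairing_commute: "pairing x y = pairing y x"
  unfolding pairing_def by (simp add: mult_ac)

lemma pairing_mult_Q_left:
  assumes "exp_bounded x" "exp_bounded y"
  shows "pairing (Q * x) y = pairing x y - Q * x * pairing_shift x y"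
proof -
  let ?f = "\<lambda>n. weight n * upoly n (Q * x) * upoly n y"
  let ?g = "\<lambda>n. weight n * upoly n x * upoly n y"
  let ?h = "\<lambda>n. weight n * upoly n x * upoly (Suc n) y"
  have f: "summable ?f" and g: "summable ?g" and h: "summable ?h"
    using summable_pairing exp_bounded_mult_Q assms by blast+
  have "?f (Suc n) = ?g (Suc n) - Q * x * ?h n" for n
  proof -
    have "?f (Suc n)
        = ?g (Suc n) - weight (Suc n) * ((1 - Q ^ Suc n) / (r * Q ^ n)) * x * upoly n x * upoly (Suc n) y"
      using upoly_Suc_diff[of n x] by (simp add: algebra_simps)
    then show ?thesis
      by (simp only: weight_Suc) (simp add: mult_ac)
  qed
  then have "(\<Sum>n. ?f (Suc n)) = (\<Sum>n. ?g (Suc n)) - Q * x * pairing_shift x y"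
    unfolding pairing_shift_def
    using suminf_diff[OF summable_Suc_iff[THEN iffD2, OF g] summable_mult[OF h, of "Q * x"]]
    by (simp add: suminf_mult[OF h])
  then show ?thesis
    unfolding pairing_def suminf_split_head[OF f] suminf_split_head[OF g] by (simp add: weight_def)
qed

lemma pairing_shift_contiguous:
  assumes "exp_bounded x" "exp_bounded y"
  shows "r * (Q * y) * pairing_shift x (Q * y)
    = (Q * y - 1) * (Q * y + r) * pairing x y + r * pairing x (Q * y)"
proof -
  have Qy: "exp_bounded (Q * y)"
    using assms(2) by (rule exp_bounded_mult_Q)
  have "r * (Q * y) * (weight n * upoly n x * upoly (Suc n) (Q * y))
      = (Q * y - 1) * (Q * y + r) * (weight n * upoly n x * upoly n y)
        + r * (weight n * upoly n x * upoly n (Q * y))" for n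
  proof -
    have "Q * y * r * upoly (Suc n) (Q * y) = (Q * y - 1) * (Q * y + r) * upoly n y + r * upoly n (Q * y)"
      using upoly_contiguous[of "Q * y" n] Q_pos by simp
    then have "weight n * upoly n x * (Q * y * r * upoly (Suc n) (Q * y))
        = weight n * upoly n x * ((Q * y - 1) * (Q * y + r) * upoly n y + r * upoly n (Q * y))"
      by (rule arg_cong)
    then show ?thesis
      by (simp only: distrib_left mult_ac)
  qed
  then show ?thesis
    unfolding pairing_shift_def pairing_def
    using summable_pairing[OF assms(1) Qy] summable_pairing[OF assms]
    by (simp add: suminf_mult[symmetric] suminf_add)
qed

lemma pairing_shift_at_root:
  assumes "exp_bounded x" and b: "(b - 1) * (b + r) = 0"
  shows "b * pairing_shift x b = pairing x b"
proof -
  have termwise: "b * (weight n * upoly n x * upoly (Suc n) b) = weight n * upoly n x * upoly n b" for n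
  proof -
    have "r * (b * upoly (Suc n) b) = r * upoly n b"
      using upoly_contiguous[of b n] unfolding b by (simp add: mult_ac)
    then have "b * upoly (Suc n) b = upoly n b"
      using r_pos by simp
    then show ?thesis
      by (simp add: mult_ac)
  qed
  have "b * pairing_shift x b = (\<Sum>n. b * (weight n * upoly n x * upoly (Suc n) b))"
    unfolding pairing_shift_def
    using summable_pairing(2)[OF assms(1) exp_bounded_at_root[OF b]] by (rule suminf_mult[symmetric])
  then show ?thesis
    unfolding termwise pairing_def .
qed

lemma pairing_recurrence:
  assumes "exp_bounded x" "exp_bounded y" "y \<noteq> 0"
  shows "pairing (Q * x) (Q * y)
    = (1 - x / y) * pairing x (Q * y) + x * (1 - Q * y) * (Q * y + r) / (r * y) * pairing x y"
proof -
  have "pairing (Q * x) (Q * y) = pairing x (Q * y) - Q * x * pairing_shift x (Q * y)"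
    using assms exp_bounded_mult_Q by (intro pairing_mult_Q_left) auto
  also have "Q * x * pairing_shift x (Q * y)
      = x / (r * y) * ((Q * y - 1) * (Q * y + r) * pairing x y + r * pairing x (Q * y))"
    unfolding pairing_shift_contiguous[OF assms(1,2), symmetric]
    using assms(3) Q_pos r_pos by (simp add: field_simps)
  also have "pairing x (Q * y) - x / (r * y) * ((Q * y - 1) * (Q * y + r) * pairing x y + r * pairing x (Q * y))
      = (1 - x / y) * pairing x (Q * y) + x * (1 - Q * y) * (Q * y + r) / (r * y) * pairing x y"
    using assms(3) r_pos by (simp add: field_simps)
  finally show ?thesis .
qed

lemma pairing_mult_Q_at_root:
  assumes "exp_bounded x" and b: "(b - 1) * (b + r) = 0"
  shows "pairing (Q * x) b = (1 - Q * x / b) * pairing x b"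
proof -
  have "b \<noteq> 0"
    using b r_pos by auto
  have "pairing (Q * x) b = pairing x b - Q * x / b * (b * pairing_shift x b)"
    using pairing_mult_Q_left[OF assms(1) exp_bounded_at_root[OF b]] \<open>b \<noteq> 0\<close> by simp
  then show ?thesis
    unfolding pairing_shift_at_root[OF assms] by (simp add: algebra_simps)
qed

lemma pairing_power_Q_at_root:
  assumes "exp_bounded a" and b: "(b - 1) * (b + r) = 0"
  shows "pairing (a * Q ^ k) b = qpoch (a * Q / b) Q k * pairing a b"
proof (induction k)
  case (Suc k)
  have "pairing (a * Q ^ Suc k) b = (1 - Q * (a * Q ^ k) / b) * pairing (a * Q ^ k) b"
    using pairing_mult_Q_at_root[OF exp_bounded_mult_power_Q[OF assms(1)] b] by (simp add: mult_ac)
  then show ?case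
    unfolding Suc.IH by (simp add: qpoch_Suc mult_ac)
qed simp

lemma pairing_spectral_step:
  assumes "exp_bounded x" "exp_bounded y" and b: "(b - 1) * (b + r) = 0" and y: "y = b * t" "t \<noteq> 0"
    and left: "pairing x y = P"
    and right: "(1 - x / y) * pairing x (Q * y) = (1 - x / y) * (P * (1 + Q * b\<^sup>2 / r * t))"
  shows "pairing (Q * x) (Q * y) = P * (1 + Q * b\<^sup>2 / r * t) * (1 - Q * x / b)"
proof -
  have "b \<noteq> 0" "y \<noteq> 0"
    using b r_pos y by auto
  have root: "(1 - Q * y) * (Q * y + r) / r = (1 + Q * b\<^sup>2 / r * t) * (1 - Q * t)"
  proof -
    from b have "b = 1 \<or> b = - r"
      by auto
    then show ?thesis
      using r_pos by (auto simp: y field_simps power2_eq_square)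
  qed
  have factor: "x * (1 - Q * y) * (Q * y + r) / (r * y) = x / y * ((1 + Q * b\<^sup>2 / r * t) * (1 - Q * t))"
    unfolding root[symmetric] using \<open>y \<noteq> 0\<close> r_pos by (simp add: field_simps)
  have ring: "(1 - z) * (P * c) + z * (c * (1 - Q * t)) * P = P * c * (1 - z * Q * t)" for z c
    by (simp add: algebra_simps)
  have "pairing (Q * x) (Q * y) = P * (1 + Q * b\<^sup>2 / r * t) * (1 - x / y * Q * t)"
    unfolding pairing_recurrence[OF assms(1,2) \<open>y \<noteq> 0\<close>] right left factor by (rule ring)
  also have "x / y * Q * t = Q * x / b"
    using \<open>t \<noteq> 0\<close> by (simp add: y field_simps)
  finally show ?thesis .
qed

text \<open>For a = b the factor 1 - x/y of the recurrence vanishes on the diagonal, so the induction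
  never needs a value above it.\<close>
lemma pairing_spectral:
  assumes a: "(a - 1) * (a + r) = 0" and b: "(b - 1) * (b + r) = 0" and diag: "a = b \<Longrightarrow> l \<le> k"
  shows "pairing (a * Q ^ k) (b * Q ^ l)
    = pairing a b * qpoch (a * Q / b) Q k * qpoch (- (Q * b\<^sup>2 / r)) Q l"
  using diag
proof (induction k arbitrary: l)
  case 0
  show ?case
  proof (cases "a = b")
    case False
    with a b have "r = - (a * b)" "a \<noteq> 0" "b \<noteq> 0"
      using r_pos by auto
    then have "b * Q / a = - (Q * b\<^sup>2 / r)"
      by (simp add: field_simps power2_eq_square)
    then show ?thesis
      using pairing_power_Q_at_root[OF exp_bounded_at_root[OF b] a, of l]
      by (simp add: pairing_commute[of a])
  qed (use 0 in simp)
next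
  case (Suc k)
  show ?case
  proof (cases l)
    case 0
    then show ?thesis
      using pairing_power_Q_at_root[OF exp_bounded_at_root[OF a] b, of "Suc k"] by simp
  next
    case (Suc i)
    let ?P = "pairing a b * qpoch (a * Q / b) Q k * qpoch (- (Q * b\<^sup>2 / r)) Q i"
    have left: "pairing (a * Q ^ k) (b * Q ^ i) = ?P"
      using Suc.IH[of i] Suc.prems \<open>l = Suc i\<close> by simp
    have "(1 - a * Q ^ k / (b * Q ^ i)) * pairing (a * Q ^ k) (Q * (b * Q ^ i))
        = (1 - a * Q ^ k / (b * Q ^ i)) * (?P * (1 + Q * b\<^sup>2 / r * Q ^ i))"
    proof (cases "a = b \<and> i = k")
      case False
      then have "a = b \<Longrightarrow> Suc i \<le> k"
        using Suc.prems \<open>l = Suc i\<close> by auto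
      then show ?thesis
        using Suc.IH[of "Suc i"] by (simp add: qpoch_Suc mult_ac)
    qed (use b r_pos Q_pos in auto)
    from pairing_spectral_step[OF exp_bounded_mult_power_Q[OF exp_bounded_at_root[OF a]]
        exp_bounded_mult_power_Q[OF exp_bounded_at_root[OF b]] b refl _ left this]
    show ?thesis
      using Q_pos by (simp add: \<open>l = Suc i\<close> qpoch_Suc mult_ac)
  qed
qed

lemma pairing_at_1_1: "pairing 1 1 = euler_series (Q * r)"
  unfolding pairing_def euler_series_def weight_def by (simp add: upoly_at_1)

lemma pairing_at_minus_r_minus_r: "pairing (- r) (- r) = euler_series (Q / r)"
proof -
  have "weight n * upoly n (- r) * upoly n (- r) = euler_coeff n * (Q / r) ^ n" for n
    using r_pos by (simp add: weight_def upoly_at_minus_r power_mult_distrib[symmetric])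
  then show ?thesis
    unfolding pairing_def euler_series_def by simp
qed

lemma pairing_at_minus_r_1: "pairing (- r) 1 = euler_series (- Q)"
proof -
  have "weight n * upoly n (- r) * upoly n 1 = euler_coeff n * (- Q) ^ n" for n
    using r_pos by (simp add: weight_def upoly_at_minus_r upoly_at_1 power_mult_distrib[symmetric])
  then show ?thesis
    unfolding pairing_def euler_series_def by simp
qed

lemma pairing_at_minus_r_powers:
  "l \<le> k \<Longrightarrow> pairing (- r * Q ^ k) (- r * Q ^ l)
    = qpoch_inf (- (Q / r)) Q * qpoch Q Q k * qpoch (- (Q * r)) Q l"
  using pairing_spectral[of "- r" "- r" l k] r_pos
  by (simp add: pairing_at_minus_r_minus_r qpoch_inf_eq_euler_series power2_eq_square)

lemma pairing_at_powers:
  "l \<le> k \<Longrightarrow> pairing (Q ^ k) (Q ^ l) = qpoch_inf (- (Q * r)) Q * qpoch Q Q k * qpoch (- (Q / r)) Q l"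
  using pairing_spectral[of 1 1 l k] by (simp add: pairing_at_1_1 qpoch_inf_eq_euler_series)

lemma pairing_at_mixed_powers:
  "pairing (- r * Q ^ k) (Q ^ l) = qpoch_inf Q Q * qpoch (- (Q * r)) Q k * qpoch (- (Q / r)) Q l"
  using pairing_spectral[of "- r" 1 l k] r_pos
  by (simp add: pairing_at_minus_r_1 qpoch_inf_eq_euler_series[of "- Q", simplified] mult.commute[of Q r])

lemma phi21_eq_upoly:
  assumes "r * c = 1" "lam \<noteq> 0"
  shows "phi21 (inverse (Q ^ n)) (c / lam) 0 Q (- Q * lam) = upoly n (r * lam)"
proof -
  define x where "x = r * lam"
  have "x \<noteq> 0" and c: "c / lam = 1 / x" and z: "- Q * lam = - Q / r * x"
    using assms r_pos by (auto simp: x_def field_simps)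
  have newton: "qpoch (1 / x) Q j * x ^ j = newton_prod j x" for j
  proof -
    have "qpoch (1 / x) Q j * x ^ j = (\<Prod>i<j. (1 - 1 / x * Q ^ i) * x)"
      by (simp add: qpoch_def prod.distrib)
    also have "\<dots> = newton_prod j x"
      unfolding newton_prod_def using \<open>x \<noteq> 0\<close> by (intro prod.cong) (auto simp: field_simps)
    finally show ?thesis .
  qed
  have "phi21 (inverse (Q ^ n)) (c / lam) 0 Q (- Q * lam)
      = (\<Sum>j. qpoch (inverse (Q ^ n)) Q j / qpoch Q Q j * (- Q / r) ^ j * (qpoch (1 / x) Q j * x ^ j))"
    unfolding phi21_def c z power_mult_distrib by (simp add: mult_ac)
  also have "\<dots> = (\<Sum>j\<le>n. ucoeff n j * newton_prod j x)"
    using qpoch_inverse_power_eq_0[of Q n] Q_pos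
    by (subst suminf_finite[of "{..n}"]) (auto simp: newton ucoeff_def)
  finally show ?thesis
    unfolding upoly_def x_def .
qed

lemma pn_product_eq_weight:
  assumes "0 < q" "Q = q\<^sup>2" "r = q powr (- (2 * \<tau>))" "a \<noteq> 0"  "b \<noteq> 0"
  shows "q ^ (2 * n) * (pn q \<tau> a n * pn q \<tau> b n) = weight n * upoly n (r * a) * upoly n (r * b)"
proof -
  define A where "A = q powr (- (real n * \<tau>))"
  define B where "B = q powr (real n * (real n - 1) / 2)"
  define R where "R = qpoch Q Q n"
  have "r * q powr (2 * \<tau>) = 1"
    using assms(1,3) by (simp add: powr_add[symmetric])
  moreover have "q powr (- (2 * real n)) = inverse (Q ^ n)"
    using powr_realpow[of q "2 * n"] assms(1,2) by (simp add: powr_minus power_mult)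
  ultimately have pn: "pn q \<tau> lam n = A * B / sqrt R * upoly n (r * lam)" if "lam \<noteq> 0" for lam
    unfolding pn_def A_def B_def R_def using phi21_eq_upoly[OF _ that] assms(2) by simp
  have "r ^ n = q powr (- (2 * \<tau>) * real n)"
    using assms(1,3) by (simp add: powr_realpow[symmetric] powr_powr)
  then have "A * A = r ^ n"
    by (simp add: A_def powr_add[symmetric] algebra_simps)
  moreover have "B * B = (\<Prod>i<n. Q ^ i)"
    using assms(1,2) by (simp add: B_def prod_power_square_eq_powr powr_add[symmetric])
  moreover have "sqrt R * sqrt R = R"
    using qpoch_Q_Q_pos[of n] by (simp add: R_def)
  moreover have "q ^ (2 * n) = Q ^ n"
    using assms(2) by (simp add: power_mult)
  moreover have "(A * B / sqrt R * u) * (A * B / sqrt R * v) = (A * A) * (B * B) / (sqrt R * sqrt R) * u * v"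
    for u v by (simp add: field_simps)
  ultimately show ?thesis
    unfolding pn[OF assms(4)] pn[OF assms(5)] weight_def euler_coeff_def R_def[symmetric]
    by (simp add: power_mult_distrib mult_ac)
qed

lemma D_inner_vvec_eq_pairing:
  assumes "0 < q" "Q = q\<^sup>2" "r = q powr (- (2 * \<tau>))" "a \<noteq> 0" "b \<noteq> 0"
    and "exp_bounded (r * a)" "exp_bounded (r * b)"
  shows "D_inner q (vvec q \<tau> \<phi> a) (vvec q \<tau> \<phi> b) = of_real (pairing (r * a) (r * b))"
proof -
  have "D_inner q (vvec q \<tau> \<phi> a) (vvec q \<tau> \<phi> b)
      = (\<Sum>n. of_real (weight n * upoly n (r * a) * upoly n (r * b)))"
    unfolding D_inner_def
    by (intro suminf_cong)
      (simp only: mult.assoc vvec_mult_cnj of_real_mult[symmetric] pn_product_eq_weight[OF assms(1-5)])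
  also have "\<dots> = of_real (pairing (r * a) (r * b))"
    unfolding pairing_def by (rule suminf_of_real[symmetric, OF summable_pairing(1)[OF assms(6,7)]])
  finally show ?thesis .
qed

end

theorem lemma5p5:
  fixes q \<tau> \<phi> :: real
  assumes "0 < q" "q < 1" "0 \<le> \<phi>" "\<phi> < 2 * pi"
  shows "(\<forall>k l. l \<le> k \<longrightarrow>
            D_inner q (vvec q \<tau> \<phi> (- (q ^ (2 * k)))) (vvec q \<tau> \<phi> (- (q ^ (2 * l))))
            = of_real (qpoch_inf (- (q powr (2 * \<tau> + 2))) (q^2) * qpoch (q^2) (q^2) k
                       * qpoch (- (q powr (2 - 2 * \<tau>))) (q^2) l))
       \<and> (\<forall>k l. l \<le> k \<longrightarrow>
            D_inner q (vvec q \<tau> \<phi> (q powr (2 * \<tau> + 2 * real k))) (vvec q \<tau> \<phi> (q powr (2 * \<tau> + 2 * real l)))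
            = of_real (qpoch_inf (- (q powr (2 - 2 * \<tau>))) (q^2) * qpoch (q^2) (q^2) k
                       * qpoch (- (q powr (2 + 2 * \<tau>))) (q^2) l))
       \<and> (\<forall>k l.
            D_inner q (vvec q \<tau> \<phi> (- (q ^ (2 * k)))) (vvec q \<tau> \<phi> (q powr (2 * \<tau> + 2 * real l)))
            = of_real (qpoch_inf (q^2) (q^2) * qpoch (- (q powr (2 - 2 * \<tau>))) (q^2) k
                       * qpoch (- (q powr (2 + 2 * \<tau>))) (q^2) l))"
proof -
  define r where "r = q powr (- (2 * \<tau>))"
  interpret q_polys "q\<^sup>2" r
    using assms(1,2) by unfold_locales (simp_all add: r_def power_less_one_iff)
  have "q powr (2 * \<tau>) = 1 / r" "q powr 2 = q\<^sup>2"
    using assms(1) by (simp_all add: r_def powr_minus divide_inverse)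
  then have powr_eqs: "q powr (2 * \<tau> + 2) = q\<^sup>2 / r" "q powr (2 + 2 * \<tau>) = q\<^sup>2 / r"
      "q powr (2 - 2 * \<tau>) = q\<^sup>2 * r"
    by (simp_all add: powr_add powr_diff r_def)
  have "q powr (2 * real k) = (q\<^sup>2) ^ k" for k
    using powr_realpow[OF assms(1), of "2 * k"] by (simp add: power_mult)
  then have points: "r * - (q ^ (2 * k)) = - r * (q\<^sup>2) ^ k"
      "r * q powr (2 * \<tau> + 2 * real k) = (q\<^sup>2) ^ k" for k
    using assms(1) by (simp_all add: r_def power_mult powr_add[symmetric])
  have nonzero: "- (q ^ (2 * k)) \<noteq> 0" "q powr (2 * \<tau> + 2 * real k) \<noteq> 0" for k
    using assms(1) by simp_all
  have bounded: "exp_bounded (r * - (q ^ (2 * k)))" "exp_bounded (r * q powr (2 * \<tau> + 2 * real k))" for k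
    unfolding points
    using exp_bounded_mult_power_Q[OF exp_bounded_at_root, of "- r"]
      exp_bounded_mult_power_Q[OF exp_bounded_at_root, of 1]
    by simp_all
  note D = D_inner_vvec_eq_pairing[OF assms(1) refl r_def]
  show ?thesis
    by (intro conjI allI impI)
      (simp_all only: D[OF nonzero(1,1) bounded(1,1)] D[OF nonzero(2,2) bounded(2,2)]
        D[OF nonzero(1,2) bounded(1,2)] points powr_eqs pairing_at_minus_r_powers pairing_at_powers
        pairing_at_mixed_powers)
qed

end
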